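(* Let $p>1$ and let $w\in N_p$ be a weight that is positive on a set of positive measure. Then the space $ML^p(w)$ is order-continuous if and only if $w\notin L^1(\mathbb{R}^n)$.
   Context: A weight is a non-negative locally integrable function on $\mathbb{R}^n$. $N_p$ is the class of weights with $\int w(x)(1+|x|)^{-np}\,dx<\infty$. $Mf(x)=\sup_{Q\ni x}\frac1{|Q|}\int_Q|f|$ is the Hardy–Littlewood maximal operator, with the supremum over cubes containing $x$. $ML^p(w)$ is the space of measurable $f$ with $\|f\|_{ML^p(w)}:=\|Mf\|_{L^p(w)}<\infty$. A Banach function space $X$ is order-continuous if for every sequence $(f_j)$ in $X$ with $f_j\downarrow0$ a.e., one has $\|f_j\|_X\downarrow0$. *)

theory Defs
  imports "HOL-Analysis.Analysis"
begin

definition cubes :: "'a::euclidean_space set set" where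
  "cubes = {cbox a (a + r *\<^sub>R One) | a r. r > 0}"

definition maximal_fn :: "('a::euclidean_space \<Rightarrow> real) \<Rightarrow> 'a \<Rightarrow> ennreal" where
  "maximal_fn f x = (SUP Q\<in>{Q\<in>cubes. x \<in> Q}.
      (\<integral>\<^sup>+ y\<in>Q. ennreal \<bar>f y\<bar> \<partial>lebesgue) / emeasure lebesgue Q)"

definition ennpowr :: "ennreal \<Rightarrow> real \<Rightarrow> ennreal" where
  "ennpowr t p = (if t = \<infinity> then \<infinity> else ennreal (enn2real t powr p))"

definition weight :: "('a::euclidean_space \<Rightarrow> real) \<Rightarrow> bool" where
  "weight w \<longleftrightarrow> (\<forall>x. 0 \<le> w x) \<and> w \<in> borel_measurable lebesgue \<and>
     (\<forall>K. compact K \<longrightarrow> set_integrable lebesgue K w)"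

definition Np_class :: "real \<Rightarrow> ('a::euclidean_space \<Rightarrow> real) set" where
  "Np_class p = {w. weight w \<and>
     (\<integral>\<^sup>+ x. ennreal (w x * (1 + norm x) powr (- real DIM('a) * p)) \<partial>lebesgue) < \<infinity>}"

definition MLp_integral :: "real \<Rightarrow> ('a::euclidean_space \<Rightarrow> real) \<Rightarrow> ('a \<Rightarrow> real) \<Rightarrow> ennreal" where
  "MLp_integral p w f = (\<integral>\<^sup>+ x. ennpowr (maximal_fn f x) p * ennreal (w x) \<partial>lebesgue)"

definition MLp_space :: "real \<Rightarrow> ('a::euclidean_space \<Rightarrow> real) \<Rightarrow> ('a \<Rightarrow> real) set" where
  "MLp_space p w = {f. f \<in> borel_measurable lebesgue \<and> MLp_integral p w f < \<infinity>}"

definition MLp_norm :: "real \<Rightarrow> ('a::euclidean_space \<Rightarrow> real) \<Rightarrow> ('a \<Rightarrow> real) \<Rightarrow> real" where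
  "MLp_norm p w f = enn2real (MLp_integral p w f) powr (1 / p)"

definition MLp_order_continuous :: "real \<Rightarrow> ('a::euclidean_space \<Rightarrow> real) \<Rightarrow> bool" where
  "MLp_order_continuous p w \<longleftrightarrow>
     (\<forall>f :: nat \<Rightarrow> 'a \<Rightarrow> real.
        (\<forall>j. f j \<in> MLp_space p w) \<longrightarrow>
        (\<forall>j. AE x in lebesgue. \<bar>f (Suc j) x\<bar> \<le> \<bar>f j x\<bar>) \<longrightarrow>
        (AE x in lebesgue. (\<lambda>j. f j x) \<longlonglongrightarrow> 0) \<longrightarrow>
        (\<lambda>j. MLp_norm p w (f j)) \<longlonglongrightarrow> 0)"

end

theory Submission
  imports Defs
begin

text \<open>
  If w is integrable, the indicators of the orthants {y. j \<le> y \<bullet> b for all b} decrease to 0,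
  but their maximal functions stay between 2^-n and 1 everywhere, so their ML^p(w) norms stay
  comparable to the positive number (\<integral> w)^(1/p).

  If \<integral> w = \<infinity>, then no f in ML^p(w) can have Mf bounded below by a positive constant. Hence
  f is locally integrable and, around every point, its averages over large cubes are small.
  Now let f_j decrease to 0. Averages of f_j over large cubes are dominated by those of f_0;
  small cubes near x lie in a fixed box B, where they only see f_j 1_B, whose L^1 norms tend
  to 0 by dominated convergence. The weak type (1,1) inequality turns this into Mf_j \<rightarrow> 0
  almost everywhere, and dominated convergence with majorant (Mf_0)^p w gives the claim.
\<close>


section \<open>Cubes\<close>

abbreviation cube :: "'a::euclidean_space \<Rightarrow> real \<Rightarrow> 'a set" where
  "cube a r \<equiv> cbox a (a + r *\<^sub>R One)"

lemma emeasure_cube: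
  fixes a :: "'a::euclidean_space"
  assumes "r \<ge> 0"
  shows "emeasure lebesgue (cube a r) = ennreal (r ^ DIM('a))"
  using assms by (simp add: emeasure_completion emeasure_lborel_cbox_eq inner_add_left prod_ennreal)

lemma cube_subset_enlarged_cube:
  fixes a :: "'a::euclidean_space"
  assumes "r \<ge> 0" "d \<ge> 0"
  shows "cube a r \<subseteq> cube (a - d *\<^sub>R One) (r + 2 * d)"
  unfolding subset_box(1) using assms by (simp add: inner_diff_left inner_add_left)

lemma mem_enlarged_cube:
  fixes a :: "'a::euclidean_space"
  assumes "x \<in> cube a r" "dist x z \<le> d"
  shows "z \<in> cube (a - d *\<^sub>R One) (r + 2 * d)"
  unfolding mem_box
proof
  fix b :: 'a assume b: "b \<in> Basis"
  have "\<bar>(z - x) \<bullet> b\<bar> \<le> dist x z"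
    using Basis_le_norm[OF b, of "z - x"] by (simp add: dist_norm norm_minus_commute)
  moreover have "a \<bullet> b \<le> x \<bullet> b" "x \<bullet> b \<le> a \<bullet> b + r"
    using assms(1) b by (auto simp: mem_box inner_add_left)
  ultimately show "(a - d *\<^sub>R One) \<bullet> b \<le> z \<bullet> b \<and> z \<bullet> b \<le> (a - d *\<^sub>R One + (r + 2 * d) *\<^sub>R One) \<bullet> b"
    using assms(2) b by (simp add: inner_diff_left inner_add_left abs_le_iff)
qed

lemma cball_subset_cube:
  fixes c :: "'a::euclidean_space"
  shows "cball c \<rho> \<subseteq> cube (c - \<rho> *\<^sub>R One) (2 * \<rho>)"
proof
  fix z assume "z \<in> cball c \<rho>"
  then show "z \<in> cube (c - \<rho> *\<^sub>R One) (2 * \<rho>)"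
    using mem_enlarged_cube[of c c 0 z \<rho>] by (simp add: mem_cball)
qed

lemma emeasure_cball_le:
  fixes c :: "'a::euclidean_space"
  assumes "\<rho> \<ge> 0"
  shows "emeasure lebesgue (cball c \<rho>) \<le> ennreal ((2 * \<rho>) ^ DIM('a))"
proof -
  have "emeasure lebesgue (cball c \<rho>) \<le> emeasure lebesgue (cube (c - \<rho> *\<^sub>R One) (2 * \<rho>))"
    by (intro emeasure_mono cball_subset_cube) simp
  also have "\<dots> = ennreal ((2 * \<rho>) ^ DIM('a))" using assms by (intro emeasure_cube) simp
  finally show ?thesis .
qed

lemma bounded_subset_cube:
  fixes S :: "'a::euclidean_space set"
  assumes "bounded S"
  obtains a r where "r > 0" "S \<subseteq> cube a r"
proof -
  obtain x \<epsilon> where "S \<subseteq> cball x \<epsilon>" "\<epsilon> \<ge> 0" using assms by (auto simp: bounded_subset_cball)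
  moreover have "cball x \<epsilon> \<subseteq> cball x (\<epsilon> + 1)" by (rule subset_cball) simp
  ultimately have "S \<subseteq> cube (x - (\<epsilon> + 1) *\<^sub>R One) (2 * (\<epsilon> + 1))"
    using cball_subset_cube[of x "\<epsilon> + 1"] by blast
  then show ?thesis using \<open>\<epsilon> \<ge> 0\<close> by (intro that) auto
qed

lemma cube_subset_cball:
  fixes a :: "'a::euclidean_space"
  assumes "r \<ge> 0"
  shows "cube a r \<subseteq> cball (a + (r/2) *\<^sub>R One) (real DIM('a) * r / 2)"
proof
  fix y assume y: "y \<in> cube a r"
  have "dist (a + (r/2) *\<^sub>R One) y \<le> (\<Sum>b\<in>Basis. \<bar>((a + (r/2) *\<^sub>R One) - y) \<bullet> b\<bar>)"
    unfolding dist_norm by (rule norm_le_l1)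
  also have "\<dots> \<le> (\<Sum>b\<in>(Basis::'a set). r / 2)"
  proof (rule sum_mono)
    fix b :: 'a assume b: "b \<in> Basis"
    have "a \<bullet> b \<le> y \<bullet> b" "y \<bullet> b \<le> a \<bullet> b + r" using y b by (auto simp: mem_box inner_add_left)
    moreover have "((a + (r/2) *\<^sub>R One) - y) \<bullet> b = a \<bullet> b + r/2 - y \<bullet> b"
      using b by (simp add: inner_diff_left inner_add_left)
    ultimately show "\<bar>((a + (r/2) *\<^sub>R One) - y) \<bullet> b\<bar> \<le> r / 2"
      unfolding abs_le_iff by linarith
  qed
  finally show "y \<in> cball (a + (r/2) *\<^sub>R One) (real DIM('a) * r / 2)" by simp
qed

lemma cube_subset_centered_cube:
  fixes x :: "'a::euclidean_space"
  assumes "x \<in> cube a r" "norm x \<le> s" "r \<le> s"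
  shows "cube a r \<subseteq> cbox (- (2 * s) *\<^sub>R One) ((2 * s) *\<^sub>R One)"
  unfolding subset_box(1)
proof (intro impI ballI)
  fix b :: 'a assume b: "b \<in> Basis"
  have "\<bar>x \<bullet> b\<bar> \<le> s" using Basis_le_norm[OF b, of x] assms(2) by linarith
  moreover have "a \<bullet> b \<le> x \<bullet> b" "x \<bullet> b \<le> a \<bullet> b + r" using assms(1) b by (auto simp: mem_box inner_add_left)
  ultimately show "(- (2 * s) *\<^sub>R One) \<bullet> b \<le> a \<bullet> b \<and> (a + r *\<^sub>R One) \<bullet> b \<le> ((2 * s) *\<^sub>R One) \<bullet> b"
    using assms(3) b by (auto simp: inner_add_left abs_le_iff)
qed

section \<open>The maximal function on cubes\<close>

lemma set_nn_integral_cube_le_maximal_fn: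
  fixes a :: "'a::euclidean_space"
  assumes "r > 0" "x \<in> cube a r"
  shows "(\<integral>\<^sup>+ y\<in>cube a r. ennreal \<bar>f y\<bar> \<partial>lebesgue) \<le> maximal_fn f x * ennreal (r ^ DIM('a))"
proof -
  let ?I = "\<integral>\<^sup>+ y\<in>cube a r. ennreal \<bar>f y\<bar> \<partial>lebesgue" and ?m = "ennreal (r ^ DIM('a))"
  have "cube a r \<in> {Q\<in>cubes. x \<in> Q}" using assms unfolding cubes_def by auto
  then have "?I / emeasure lebesgue (cube a r) \<le> maximal_fn f x"
    unfolding maximal_fn_def by (rule SUP_upper)
  then have "?I / ?m * ?m \<le> maximal_fn f x * ?m"
    using emeasure_cube[of r a] assms(1) by (simp add: mult_right_mono)
  moreover have "?I / ?m * ?m = ?I"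
    using assms(1) by (simp add: ennreal_divide_times)
  ultimately show ?thesis by simp
qed

lemma le_maximal_fn_cubeI:
  fixes a :: "'a::euclidean_space"
  assumes "r > 0" "x \<in> cube a r"
    and "c * ennreal (r ^ DIM('a)) \<le> (\<integral>\<^sup>+ y\<in>cube a r. ennreal \<bar>f y\<bar> \<partial>lebesgue)"
  shows "c \<le> maximal_fn f x"
proof -
  have "c * ennreal (r ^ DIM('a)) \<le> maximal_fn f x * ennreal (r ^ DIM('a))"
    using assms(3) set_nn_integral_cube_le_maximal_fn[OF assms(1,2)] by (rule order.trans)
  then show ?thesis
    using assms(1) by (simp add: ennreal_mult_le_mult_iff mult.commute[of _ "ennreal _"])
qed

lemma less_maximal_fn_cubeI:
  fixes a :: "'a::euclidean_space"
  assumes "r > 0" "x \<in> cube a r"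
    and "c * ennreal (r ^ DIM('a)) < (\<integral>\<^sup>+ y\<in>cube a r. ennreal \<bar>f y\<bar> \<partial>lebesgue)"
  shows "c < maximal_fn f x"
proof (rule ccontr)
  assume "\<not> c < maximal_fn f x"
  then have "maximal_fn f x * ennreal (r ^ DIM('a)) \<le> c * ennreal (r ^ DIM('a))"
    by (simp add: mult_right_mono)
  then show False
    using assms(3) set_nn_integral_cube_le_maximal_fn[OF assms(1,2), of f] by simp
qed

lemma less_maximal_fn_cubeE:
  fixes x :: "'a::euclidean_space"
  assumes "c < maximal_fn f x"
  obtains a r where "r > 0" "x \<in> cube a r"
    "c * ennreal (r ^ DIM('a)) < (\<integral>\<^sup>+ y\<in>cube a r. ennreal \<bar>f y\<bar> \<partial>lebesgue)"
proof -
  obtain Q where "Q \<in> cubes" "x \<in> Q"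
    and less: "c < (\<integral>\<^sup>+ y\<in>Q. ennreal \<bar>f y\<bar> \<partial>lebesgue) / emeasure lebesgue Q"
    using assms unfolding maximal_fn_def less_SUP_iff by blast
  then obtain a r where Q: "Q = cube a r" "r > 0" unfolding cubes_def by auto
  let ?I = "\<integral>\<^sup>+ y\<in>Q. ennreal \<bar>f y\<bar> \<partial>lebesgue" and ?m = "ennreal (r ^ DIM('a))"
  have "c * ?m < ?I"
  proof (rule ccontr)
    assume "\<not> c * ?m < ?I"
    then have "?I / ?m \<le> c * ?m / ?m" by (simp add: divide_right_mono_ennreal)
    then show False using less Q emeasure_cube[of r a] by (simp add: mult_divide_eq_ennreal)
  qed
  then show ?thesis using that Q \<open>x \<in> Q\<close> by blast
qed

lemma maximal_fn_le_cubeI: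
  fixes x :: "'a::euclidean_space"
  assumes "\<And>a r. r > 0 \<Longrightarrow> x \<in> cube a r \<Longrightarrow>
     (\<integral>\<^sup>+ y\<in>cube a r. ennreal \<bar>f y\<bar> \<partial>lebesgue) \<le> c * ennreal (r ^ DIM('a))"
  shows "maximal_fn f x \<le> c"
proof (rule ccontr)
  assume "\<not> maximal_fn f x \<le> c"
  then obtain a r where "r > 0" "x \<in> cube a r"
    "c * ennreal (r ^ DIM('a)) < (\<integral>\<^sup>+ y\<in>cube a r. ennreal \<bar>f y\<bar> \<partial>lebesgue)"
    by (auto simp: not_le elim: less_maximal_fn_cubeE)
  then show False using assms by (simp add: not_le[symmetric])
qed

lemma maximal_fn_mono_AE:
  assumes "AE y in lebesgue. \<bar>g y\<bar> \<le> \<bar>f y\<bar>"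
  shows "maximal_fn g x \<le> maximal_fn f x"
proof (rule maximal_fn_le_cubeI)
  fix a r assume "r > 0" "x \<in> cube a r"
  have "AE y in lebesgue. ennreal \<bar>g y\<bar> * indicator (cube a r) y \<le> ennreal \<bar>f y\<bar> * indicator (cube a r) y"
    using assms by eventually_elim (auto simp: indicator_def)
  then have "(\<integral>\<^sup>+ y\<in>cube a r. ennreal \<bar>g y\<bar> \<partial>lebesgue) \<le> (\<integral>\<^sup>+ y\<in>cube a r. ennreal \<bar>f y\<bar> \<partial>lebesgue)"
    by (rule nn_integral_mono_AE)
  also have "\<dots> \<le> maximal_fn f x * ennreal (r ^ DIM('a))"
    using \<open>r > 0\<close> \<open>x \<in> cube a r\<close> by (rule set_nn_integral_cube_le_maximal_fn)
  finally show "(\<integral>\<^sup>+ y\<in>cube a r. ennreal \<bar>g y\<bar> \<partial>lebesgue) \<le> maximal_fn f x * ennreal (r ^ DIM('a))" .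
qed

lemma exists_pos_mult_power_add_less:
  assumes "y * ennreal (r ^ n) < I" "r > 0"
  shows "\<exists>d>0. y * ennreal ((r + d) ^ n) < I"
proof -
  obtain y' where y: "y = ennreal y'" "y' \<ge> 0"
    using assms by (cases y) (auto simp: ennreal_top_mult)
  show ?thesis
  proof (cases "I = \<infinity>")
    case True
    then show ?thesis using y by (intro exI[of _ 1]) (simp add: ennreal_mult'[symmetric])
  next
    case False
    then obtain I' where I: "I = ennreal I'" "I' \<ge> 0" by (cases I) auto
    have "y' * r ^ n < I'" using assms y I by (simp add: ennreal_mult'[symmetric] ennreal_less_iff)
    moreover have "((\<lambda>d. y' * (r + d) ^ n) \<longlongrightarrow> y' * r ^ n) (at_right 0)"
      by (auto intro!: tendsto_eq_intros)
    ultimately have "\<forall>\<^sub>F d in at_right 0. d > 0 \<and> y' * (r + d) ^ n < I'"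
      by (intro eventually_conj eventually_at_right_less order_tendstoD(2)) auto
    then obtain d :: real where "d > 0" "y' * (r + d) ^ n < I'"
      using eventually_happens'[OF trivial_limit_at_right_real] by blast
    then show ?thesis
      using y I assms(2) by (intro exI[of _ d]) (simp add: ennreal_mult'[symmetric] ennreal_less_iff)
  qed
qed

lemma open_maximal_fn_greater:
  fixes f :: "'a::euclidean_space \<Rightarrow> real"
  shows "open {x. c < maximal_fn f x}"
  unfolding open_contains_ball
proof
  fix x assume "x \<in> {x. c < maximal_fn f x}"
  then obtain a r where r: "r > 0" "x \<in> cube a r"
    and less: "c * ennreal (r ^ DIM('a)) < (\<integral>\<^sup>+ y\<in>cube a r. ennreal \<bar>f y\<bar> \<partial>lebesgue)"
    by (auto elim: less_maximal_fn_cubeE)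
  obtain d where d: "d > 0"
    and less_d: "c * ennreal ((r + d) ^ DIM('a)) < (\<integral>\<^sup>+ y\<in>cube a r. ennreal \<bar>f y\<bar> \<partial>lebesgue)"
    using exists_pos_mult_power_add_less[OF less] r by auto
  let ?Q = "cube (a - (d / 2) *\<^sub>R One) (r + d)"
  have "ball x (d / 2) \<subseteq> {x. c < maximal_fn f x}"
  proof
    fix z assume "z \<in> ball x (d / 2)"
    then have "z \<in> ?Q" using mem_enlarged_cube[OF r(2), of z "d / 2"] by simp
    have "(\<integral>\<^sup>+ y\<in>cube a r. ennreal \<bar>f y\<bar> \<partial>lebesgue) \<le> (\<integral>\<^sup>+ y\<in>?Q. ennreal \<bar>f y\<bar> \<partial>lebesgue)"
      using cube_subset_enlarged_cube[of r "d / 2" a] r d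
      by (intro nn_integral_mono) (auto simp: indicator_def)
    with less_d have "c * ennreal ((r + d) ^ DIM('a)) < (\<integral>\<^sup>+ y\<in>?Q. ennreal \<bar>f y\<bar> \<partial>lebesgue)"
      by (rule order.strict_trans2)
    then show "z \<in> {x. c < maximal_fn f x}"
      using less_maximal_fn_cubeI[of "r + d" z "a - (d / 2) *\<^sub>R One" c f] r d \<open>z \<in> ?Q\<close> by simp
  qed
  then show "\<exists>e>0. ball x e \<subseteq> {x. c < maximal_fn f x}" using d by (intro exI[of _ "d / 2"]) simp
qed

lemma borel_measurable_maximal_fn: "maximal_fn f \<in> borel_measurable lebesgue"
  by (rule borel_measurableI_greater) (simp add: open_maximal_fn_greater borel_open)

lemma maximal_fn_indicator_le_one: "maximal_fn (indicator A :: 'a::euclidean_space \<Rightarrow> real) x \<le> 1"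
proof (rule maximal_fn_le_cubeI)
  fix a :: 'a and r :: real assume "r > 0"
  have "(\<integral>\<^sup>+ y\<in>cube a r. ennreal \<bar>indicator A y\<bar> \<partial>lebesgue) \<le> (\<integral>\<^sup>+ y. indicator (cube a r) y \<partial>lebesgue)"
    by (intro nn_integral_mono) (simp add: indicator_def)
  also have "\<dots> = emeasure lebesgue (cube a r)" by (rule nn_integral_indicator) simp
  also have "\<dots> = ennreal (r ^ DIM('a))" using \<open>r > 0\<close> by (simp only: emeasure_cube)
  finally show "(\<integral>\<^sup>+ y\<in>cube a r. ennreal \<bar>indicator A y\<bar> \<partial>lebesgue) \<le> 1 * ennreal (r ^ DIM('a))"
    by simp
qed

lemma maximal_fn_eq_top_if_set_nn_integral_eq_top:
  fixes g :: "'a::euclidean_space \<Rightarrow> real"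
  assumes "bounded S" "(\<integral>\<^sup>+ y\<in>S. ennreal \<bar>g y\<bar> \<partial>lebesgue) = \<infinity>"
  shows "maximal_fn g x = \<infinity>"
proof -
  obtain a r where r: "r > 0" "insert x S \<subseteq> cube a r"
    using assms(1) bounded_insert by (metis bounded_subset_cube)
  have "(\<integral>\<^sup>+ y\<in>S. ennreal \<bar>g y\<bar> \<partial>lebesgue) \<le> (\<integral>\<^sup>+ y\<in>cube a r. ennreal \<bar>g y\<bar> \<partial>lebesgue)"
    using r by (intro nn_integral_mono) (auto simp: indicator_def)
  then have "\<infinity> * ennreal (r ^ DIM('a)) \<le> (\<integral>\<^sup>+ y\<in>cube a r. ennreal \<bar>g y\<bar> \<partial>lebesgue)"
    using assms(2) r by (simp add: top_unique)
  then have "\<infinity> \<le> maximal_fn g x" using r by (intro le_maximal_fn_cubeI) auto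
  then show ?thesis by (simp add: top_unique)
qed

lemma maximal_fn_ge_if_large_cube_averages:
  fixes g :: "'a::euclidean_space \<Rightarrow> real"
  assumes "\<epsilon> > 0"
    and large: "\<And>R. \<exists>a r. R \<le> r \<and> x \<in> cube a r \<and>
      ennreal \<epsilon> * ennreal (r ^ DIM('a)) < (\<integral>\<^sup>+ y\<in>cube a r. ennreal \<bar>g y\<bar> \<partial>lebesgue)"
  shows "ennreal (\<epsilon> / 3 ^ DIM('a)) \<le> maximal_fn g y"
proof -
  obtain a r where r: "dist x y + 1 \<le> r" "x \<in> cube a r"
    and less: "ennreal \<epsilon> * ennreal (r ^ DIM('a)) < (\<integral>\<^sup>+ y\<in>cube a r. ennreal \<bar>g y\<bar> \<partial>lebesgue)"
    using large by blast
  have "r > 0" using r(1) zero_le_dist[of x y] by linarith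
  let ?Q = "cube (a - r *\<^sub>R One) (r + 2 * r)"
  have "y \<in> ?Q" using r by (intro mem_enlarged_cube) auto
  have "ennreal (\<epsilon> / 3 ^ DIM('a)) * ennreal ((r + 2 * r) ^ DIM('a)) = ennreal \<epsilon> * ennreal (r ^ DIM('a))"
    using \<open>\<epsilon> > 0\<close> \<open>r > 0\<close> by (simp add: ennreal_mult'[symmetric] power_mult_distrib)
  also have "\<dots> \<le> (\<integral>\<^sup>+ y\<in>cube a r. ennreal \<bar>g y\<bar> \<partial>lebesgue)" using less by simp
  also have "\<dots> \<le> (\<integral>\<^sup>+ y\<in>?Q. ennreal \<bar>g y\<bar> \<partial>lebesgue)"
    using cube_subset_enlarged_cube[of r r a] \<open>r > 0\<close>
    by (intro nn_integral_mono) (auto simp: indicator_def)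
  finally show ?thesis using \<open>r > 0\<close> \<open>y \<in> ?Q\<close> by (intro le_maximal_fn_cubeI) auto
qed

lemma maximal_fn_le_if_large_cubes_and_truncation:
  fixes x :: "'a::euclidean_space"
  assumes large: "\<And>a r. \<rho> \<le> r \<Longrightarrow> x \<in> cube a r \<Longrightarrow>
      (\<integral>\<^sup>+ y\<in>cube a r. ennreal \<bar>f y\<bar> \<partial>lebesgue) \<le> c * ennreal (r ^ DIM('a))"
    and small: "\<And>a r. r < \<rho> \<Longrightarrow> x \<in> cube a r \<Longrightarrow> cube a r \<subseteq> B"
    and truncated: "maximal_fn (\<lambda>y. f y * indicator B y) x \<le> c"
  shows "maximal_fn f x \<le> c"
proof (rule maximal_fn_le_cubeI)
  fix a r assume r: "r > 0" "x \<in> cube a r"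
  show "(\<integral>\<^sup>+ y\<in>cube a r. ennreal \<bar>f y\<bar> \<partial>lebesgue) \<le> c * ennreal (r ^ DIM('a))"
  proof (cases "\<rho> \<le> r")
    case False
    then have "cube a r \<subseteq> B" using small r by simp
    then have "(\<integral>\<^sup>+ y\<in>cube a r. ennreal \<bar>f y\<bar> \<partial>lebesgue)
        = (\<integral>\<^sup>+ y\<in>cube a r. ennreal \<bar>f y * indicator B y\<bar> \<partial>lebesgue)"
      by (intro nn_integral_cong) (auto simp: indicator_def)
    also have "\<dots> \<le> maximal_fn (\<lambda>y. f y * indicator B y) x * ennreal (r ^ DIM('a))"
      using r by (rule set_nn_integral_cube_le_maximal_fn)
    also have "\<dots> \<le> c * ennreal (r ^ DIM('a))" using truncated by (rule mult_right_mono) simp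
    finally show ?thesis .
  qed (use large r in simp)
qed

lemma maximal_fn_le_by_truncation:
  fixes x :: "'a::euclidean_space"
  assumes dom: "AE y in lebesgue. \<bar>f y\<bar> \<le> \<bar>h y\<bar>"
    and large: "\<forall>a r. R \<le> r \<longrightarrow> x \<in> cube a r \<longrightarrow>
      (\<integral>\<^sup>+ y\<in>cube a r. ennreal \<bar>h y\<bar> \<partial>lebesgue) \<le> c * ennreal (r ^ DIM('a))"
    and s: "max R (norm x) \<le> s"
    and truncated: "maximal_fn (\<lambda>y. f y * indicator (cbox (- (2 * s) *\<^sub>R One) ((2 * s) *\<^sub>R One)) y) x \<le> c"
  shows "maximal_fn f x \<le> c"
proof (rule maximal_fn_le_if_large_cubes_and_truncation[where \<rho>=s, OF _ _ truncated])
  fix a r assume r: "s \<le> r" "x \<in> cube a r"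
  have "AE y in lebesgue. ennreal \<bar>f y\<bar> * indicator (cube a r) y \<le> ennreal \<bar>h y\<bar> * indicator (cube a r) y"
    using dom by eventually_elim (auto simp: indicator_def)
  then have "(\<integral>\<^sup>+ y\<in>cube a r. ennreal \<bar>f y\<bar> \<partial>lebesgue) \<le> (\<integral>\<^sup>+ y\<in>cube a r. ennreal \<bar>h y\<bar> \<partial>lebesgue)"
    by (rule nn_integral_mono_AE)
  also have "\<dots> \<le> c * ennreal (r ^ DIM('a))" using large r s by simp
  finally show "(\<integral>\<^sup>+ y\<in>cube a r. ennreal \<bar>f y\<bar> \<partial>lebesgue) \<le> c * ennreal (r ^ DIM('a))" .
next
  fix a r assume "r < s" "x \<in> cube a r"
  then show "cube a r \<subseteq> cbox (- (2 * s) *\<^sub>R One) ((2 * s) *\<^sub>R One)"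
    using s by (intro cube_subset_centered_cube) auto
qed

section \<open>The weak type (1,1) inequality\<close>

lemma emeasure_countable_UN_le:
  assumes "countable I" "\<And>i. i \<in> I \<Longrightarrow> X i \<in> sets M"
  shows "emeasure M (\<Union>i\<in>I. X i) \<le> (\<integral>\<^sup>+ i. emeasure M (X i) \<partial>count_space I)"
proof -
  have "emeasure M (\<Union>i\<in>I. X i) = (\<integral>\<^sup>+ x. indicator (\<Union>i\<in>I. X i) x \<partial>M)"
    using assms by (intro nn_integral_indicator[symmetric] sets.countable_UN'') auto
  also have "\<dots> \<le> (\<integral>\<^sup>+ x. (\<integral>\<^sup>+ i. indicator (X i) x \<partial>count_space I) \<partial>M)"
    by (intro nn_integral_mono) (auto simp: indicator_def intro: order.trans[OF _ nn_integral_ge_point])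
  also have "\<dots> = (\<integral>\<^sup>+ i. (\<integral>\<^sup>+ x. indicator (X i) x \<partial>M) \<partial>count_space I)"
    using assms by (intro nn_integral_count_space_nn_integral) auto
  also have "\<dots> = (\<integral>\<^sup>+ i. emeasure M (X i) \<partial>count_space I)"
    using assms by (intro nn_integral_cong) simp
  finally show ?thesis .
qed

lemma nn_integral_count_space_set_nn_integral_le:
  assumes "countable I" "disjoint_family_on Q I" "\<And>i. i \<in> I \<Longrightarrow> Q i \<in> sets M"
    and [measurable]: "f \<in> borel_measurable M"
  shows "(\<integral>\<^sup>+ i. (\<integral>\<^sup>+ x\<in>Q i. f x \<partial>M) \<partial>count_space I) \<le> (\<integral>\<^sup>+ x. f x \<partial>M)"
proof -
  let ?\<nu> = "density M f"
  have "(\<integral>\<^sup>+ i. (\<integral>\<^sup>+ x\<in>Q i. f x \<partial>M) \<partial>count_space I) = (\<integral>\<^sup>+ i. emeasure ?\<nu> (Q i) \<partial>count_space I)"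
    using assms(3) by (intro nn_integral_cong) (simp add: emeasure_density)
  also have "\<dots> = emeasure ?\<nu> (\<Union>i\<in>I. Q i)"
    using assms(1-3) by (intro emeasure_UN_countable[symmetric]) auto
  also have "\<dots> \<le> emeasure ?\<nu> (space ?\<nu>)" by (rule emeasure_space)
  also have "\<dots> = (\<integral>\<^sup>+ x. f x \<partial>M)" by (simp add: emeasure_density)
  finally show ?thesis .
qed

lemma le_max_one_if_mult_power_less:
  fixes r t G :: real
  assumes "t > 0" "r > 0" "n > 0" "ennreal t * ennreal (r ^ n) < ennreal G"
  shows "r \<le> max 1 (G / t)"
proof (cases "r \<le> 1")
  case False
  have "ennreal (t * r ^ n) < ennreal G" using assms by (simp add: ennreal_mult'[symmetric])
  then have "t * r ^ n < G" using assms(1,2) ennreal_less_iff[of "t * r ^ n" G] by simp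
  then have "r ^ n < G / t" using assms(1) by (simp add: field_simps)
  moreover have "r \<le> r ^ n" using False assms(3) by (intro self_le_power) auto
  ultimately show ?thesis by simp
qed simp

lemma Vitali_cover_maximal_fn_greater:
  fixes g :: "'a::euclidean_space \<Rightarrow> real"
  assumes fin: "(\<integral>\<^sup>+ x. ennreal \<bar>g x\<bar> \<partial>lebesgue) < \<infinity>" and t: "t > 0"
  obtains C :: "('a \<times> real) set" where "countable C"
    "\<And>i. i \<in> C \<Longrightarrow> snd i > 0 \<and>
       ennreal t * ennreal (snd i ^ DIM('a)) < (\<integral>\<^sup>+ y\<in>cube (fst i) (snd i). ennreal \<bar>g y\<bar> \<partial>lebesgue)"
    "disjoint_family_on (\<lambda>i. cube (fst i) (snd i)) C"
    "{x. t < maximal_fn g x} \<subseteq>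
       (\<Union>i\<in>C. cball (fst i + (snd i / 2) *\<^sub>R One) (5 * (real DIM('a) * snd i / 2)))"
proof -
  define n where "n = DIM('a)"
  define I where "I i = (\<integral>\<^sup>+ y\<in>cube (fst i) (snd i). ennreal \<bar>g y\<bar> \<partial>lebesgue)" for i :: "'a \<times> real"
  define K where "K = {i. snd i > 0 \<and> ennreal t * ennreal (snd i ^ n) < I i}"
  define ctr where "ctr i = fst i + (snd i / 2) *\<^sub>R One" for i :: "'a \<times> real"
  define rad where "rad i = real n * snd i / 2" for i :: "'a \<times> real"
  obtain G where G: "(\<integral>\<^sup>+ x. ennreal \<bar>g x\<bar> \<partial>lebesgue) = ennreal G" "G \<ge> 0"
    using fin by (cases "\<integral>\<^sup>+ x. ennreal \<bar>g x\<bar> \<partial>lebesgue") auto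
  have "{x. t < maximal_fn g x} \<subseteq> (\<Union>i\<in>K. cball (ctr i) (rad i))"
  proof
    fix x assume "x \<in> {x. t < maximal_fn g x}"
    then obtain a r where "r > 0" "x \<in> cube a r"
      "ennreal t * ennreal (r ^ DIM('a)) < (\<integral>\<^sup>+ y\<in>cube a r. ennreal \<bar>g y\<bar> \<partial>lebesgue)"
      by (auto elim: less_maximal_fn_cubeE)
    then show "x \<in> (\<Union>i\<in>K. cball (ctr i) (rad i))"
      using cube_subset_cball[of r a]
      by (intro UN_I[of "(a, r)"]) (auto simp: K_def I_def ctr_def rad_def n_def)
  qed
  txt \<open>The Vitali lemma needs bounded radii; this is where \<integral> |g| < \<infinity> is used.\<close>
  moreover have "0 < rad i \<and> rad i \<le> real n * max 1 (G / t) / 2" if "i \<in> K" for i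
  proof -
    have r: "snd i > 0" and less: "ennreal t * ennreal (snd i ^ n) < I i" using that by (auto simp: K_def)
    have "I i \<le> ennreal G"
      unfolding I_def G(1)[symmetric] by (intro nn_integral_mono) (simp add: indicator_def)
    then have "snd i \<le> max 1 (G / t)"
      using order.strict_trans2[OF less] r t by (intro le_max_one_if_mult_power_less[where n=n]) (auto simp: n_def)
    then show ?thesis using r by (simp add: rad_def n_def divide_right_mono)
  qed
  ultimately obtain C where C: "countable C" "C \<subseteq> K"
    and disj: "pairwise (\<lambda>i j. disjnt (cball (ctr i) (rad i)) (cball (ctr j) (rad j))) C"
    and cover: "{x. t < maximal_fn g x} \<subseteq> (\<Union>i\<in>C. cball (ctr i) (5 * rad i))"
    by (rule Vitali_covering_lemma_cballs)
  have "cube (fst i) (snd i) \<subseteq> cball (ctr i) (rad i)" if "i \<in> C" for i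
  proof -
    have "snd i > 0" using that C(2) by (auto simp: K_def)
    then show ?thesis using cube_subset_cball[of "snd i" "fst i"] by (simp add: ctr_def rad_def n_def)
  qed
  then have "disjoint_family_on (\<lambda>i. cube (fst i) (snd i)) C"
    using disj unfolding disjoint_family_on_def pairwise_def disjnt_def by blast
  moreover have "snd i > 0 \<and> ennreal t * ennreal (snd i ^ DIM('a)) < I i" if "i \<in> C" for i
    using that C(2) by (auto simp: K_def n_def)
  ultimately show ?thesis
    using that C(1) cover unfolding I_def ctr_def rad_def n_def by blast
qed

text \<open>The constant: cubes of side r lie in balls of radius n r / 2, which the Vitali
  covering lemma enlarges by the factor 5.\<close>

theorem weak_type_maximal_fn:
  fixes g :: "'a::euclidean_space \<Rightarrow> real"
  assumes g: "g \<in> borel_measurable lebesgue" and t: "t > 0"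
  shows "ennreal t * emeasure lebesgue {x. t < maximal_fn g x}
    \<le> ennreal ((5 * real DIM('a)) ^ DIM('a)) * (\<integral>\<^sup>+ x. ennreal \<bar>g x\<bar> \<partial>lebesgue)"
proof (cases "(\<integral>\<^sup>+ x. ennreal \<bar>g x\<bar> \<partial>lebesgue) < \<infinity>")
  case False
  then have "(\<integral>\<^sup>+ x. ennreal \<bar>g x\<bar> \<partial>lebesgue) = \<infinity>" by (simp add: less_top[symmetric])
  moreover have "ennreal ((5 * real DIM('a)) ^ DIM('a)) \<noteq> 0" by simp
  ultimately show ?thesis by simp
next
  case True
  define n where "n = DIM('a)"
  define \<kappa> where "\<kappa> = ennreal ((5 * real n) ^ n)"
  obtain C where C: "countable C"
    and big: "\<And>i. i \<in> C \<Longrightarrow> snd i > 0 \<and>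
       ennreal t * ennreal (snd i ^ n) < (\<integral>\<^sup>+ y\<in>cube (fst i) (snd i). ennreal \<bar>g y\<bar> \<partial>lebesgue)"
    and disj: "disjoint_family_on (\<lambda>i. cube (fst i) (snd i)) C"
    and cover: "{x. t < maximal_fn g x} \<subseteq> (\<Union>i\<in>C. cball (fst i + (snd i / 2) *\<^sub>R One) (5 * (real n * snd i / 2)))"
    using Vitali_cover_maximal_fn_greater[OF True t, folded n_def] by blast
  let ?B = "\<lambda>i. cball (fst i + (snd i / 2) *\<^sub>R One) (5 * (real n * snd i / 2))"
  have "emeasure lebesgue {x. t < maximal_fn g x} \<le> emeasure lebesgue (\<Union>i\<in>C. ?B i)"
    using cover C by (intro emeasure_mono sets.countable_UN'') auto
  also have "\<dots> \<le> (\<integral>\<^sup>+ i. emeasure lebesgue (?B i) \<partial>count_space C)"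
    using C by (intro emeasure_countable_UN_le) auto
  also have "\<dots> \<le> (\<integral>\<^sup>+ i. \<kappa> * ennreal (snd i ^ n) \<partial>count_space C)"
  proof (intro nn_integral_mono)
    fix i assume "i \<in> space (count_space C)"
    then have r: "snd i > 0" using big by auto
    have "emeasure lebesgue (?B i) \<le> ennreal ((2 * (5 * (real n * snd i / 2))) ^ n)"
      unfolding n_def using r by (intro emeasure_cball_le) simp
    also have "2 * (5 * (real n * snd i / 2)) = (5 * real n) * snd i" by simp
    also have "((5 * real n) * snd i) ^ n = (5 * real n) ^ n * snd i ^ n" by (rule power_mult_distrib)
    finally show "emeasure lebesgue (?B i) \<le> \<kappa> * ennreal (snd i ^ n)"
      unfolding \<kappa>_def using r by (simp add: ennreal_mult)
  qed
  also have "\<dots> = \<kappa> * (\<integral>\<^sup>+ i. ennreal (snd i ^ n) \<partial>count_space C)"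
    by (rule nn_integral_cmult) simp
  finally have "ennreal t * emeasure lebesgue {x. t < maximal_fn g x}
      \<le> ennreal t * (\<kappa> * (\<integral>\<^sup>+ i. ennreal (snd i ^ n) \<partial>count_space C))"
    by (rule mult_left_mono) simp
  also have "\<dots> = \<kappa> * (\<integral>\<^sup>+ i. ennreal t * ennreal (snd i ^ n) \<partial>count_space C)"
    by (subst nn_integral_cmult) (simp_all add: ac_simps)
  also have "\<dots> \<le> \<kappa> * (\<integral>\<^sup>+ i. (\<integral>\<^sup>+ y\<in>cube (fst i) (snd i). ennreal \<bar>g y\<bar> \<partial>lebesgue) \<partial>count_space C)"
    using big by (intro mult_left_mono nn_integral_mono) (auto intro: less_imp_le)
  also have "\<dots> \<le> \<kappa> * (\<integral>\<^sup>+ x. ennreal \<bar>g x\<bar> \<partial>lebesgue)"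
    using C disj g by (intro mult_left_mono nn_integral_count_space_set_nn_integral_le) auto
  finally show ?thesis unfolding \<kappa>_def n_def .
qed

lemma null_sets_INT_maximal_fn_greater:
  fixes g :: "nat \<Rightarrow> 'a::euclidean_space \<Rightarrow> real" and t :: real
  assumes "\<And>j. g j \<in> borel_measurable lebesgue"
    and "(\<lambda>j. \<integral>\<^sup>+ x. ennreal \<bar>g j x\<bar> \<partial>lebesgue) \<longlonglongrightarrow> 0" and "t > 0"
  shows "(\<Inter>j. {x. t < maximal_fn (g j) x}) \<in> null_sets lebesgue"
proof -
  let ?A = "\<Inter>j. {x. t < maximal_fn (g j) x}"
  define \<kappa> where "\<kappa> = ennreal ((5 * real DIM('a)) ^ DIM('a))"
  have sets: "?A \<in> sets lebesgue"
    by (intro sets.countable_INT'') (auto simp: open_maximal_fn_greater borel_open)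
  have "ennreal t * emeasure lebesgue ?A \<le> \<kappa> * (\<integral>\<^sup>+ x. ennreal \<bar>g j x\<bar> \<partial>lebesgue)" for j
  proof -
    have "emeasure lebesgue ?A \<le> emeasure lebesgue {x. t < maximal_fn (g j) x}"
      by (intro emeasure_mono) (auto simp: open_maximal_fn_greater borel_open)
    then show ?thesis
      unfolding \<kappa>_def using assms(1,3)
      by (intro order.trans[OF mult_left_mono weak_type_maximal_fn]) auto
  qed
  moreover have "(\<lambda>j. \<kappa> * (\<integral>\<^sup>+ x. ennreal \<bar>g j x\<bar> \<partial>lebesgue)) \<longlonglongrightarrow> \<kappa> * 0"
    unfolding \<kappa>_def using assms(2) by (intro ennreal_tendsto_cmult) simp_all
  ultimately have "ennreal t * emeasure lebesgue ?A \<le> \<kappa> * 0"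
    by (intro LIMSEQ_le_const) auto
  then show ?thesis using sets assms(3) by (simp add: null_sets_def)
qed

section \<open>Maximal functions of decreasing sequences\<close>

lemma AE_abs_le_abs_first:
  assumes "\<And>j. AE x in M. \<bar>f (Suc j) x\<bar> \<le> \<bar>f j x\<bar>"
  shows "AE x in M. \<forall>j. \<bar>(f j x :: real)\<bar> \<le> \<bar>f 0 x\<bar>"
proof -
  have "AE x in M. \<forall>j. \<bar>f (Suc j) x\<bar> \<le> \<bar>f j x\<bar>" using assms by (simp add: AE_all_countable)
  then show ?thesis
  proof eventually_elim
    case (elim x)
    show ?case
    proof
      fix j show "\<bar>f j x\<bar> \<le> \<bar>f 0 x\<bar>"
        by (induction j) (use elim in \<open>auto intro: order.trans\<close>)
    qed
  qed
qed

lemma antimono_tendsto_zero_ennreal: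
  fixes u :: "nat \<Rightarrow> ennreal"
  assumes "antimono u" "\<And>e. e > 0 \<Longrightarrow> \<exists>j. u j \<le> ennreal e"
  shows "u \<longlonglongrightarrow> 0"
proof -
  have "(INF j. u j) \<le> 0"
  proof (rule ennreal_le_epsilon)
    fix e :: real assume "e > 0"
    then obtain j where "u j \<le> ennreal e" using assms(2) by blast
    then show "(INF j. u j) \<le> 0 + ennreal e" by (simp add: INF_lower2)
  qed
  then show ?thesis using LIMSEQ_INF[OF assms(1)] by simp
qed

lemma set_nn_integral_tendsto_zero_if_decreasing:
  fixes f :: "nat \<Rightarrow> 'a \<Rightarrow> real"
  assumes [measurable]: "\<And>j. f j \<in> borel_measurable M" "B \<in> sets M"
    and le_first: "AE x in M. \<forall>j. \<bar>f j x\<bar> \<le> \<bar>f 0 x\<bar>"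
    and lim: "AE x in M. (\<lambda>j. f j x) \<longlonglongrightarrow> 0"
    and fin: "(\<integral>\<^sup>+ x\<in>B. ennreal \<bar>f 0 x\<bar> \<partial>M) < \<infinity>"
  shows "(\<lambda>j. \<integral>\<^sup>+ x\<in>B. ennreal \<bar>f j x\<bar> \<partial>M) \<longlonglongrightarrow> 0"
proof -
  have "(\<lambda>j. \<integral>\<^sup>+ x\<in>B. ennreal \<bar>f j x\<bar> \<partial>M) \<longlonglongrightarrow> (\<integral>\<^sup>+ x. 0 \<partial>M)"
  proof (rule nn_integral_dominated_convergence[where w="\<lambda>x. ennreal \<bar>f 0 x\<bar> * indicator B x"])
    show "AE x in M. ennreal \<bar>f j x\<bar> * indicator B x \<le> ennreal \<bar>f 0 x\<bar> * indicator B x" for j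
      using le_first by eventually_elim (auto simp: indicator_def)
    show "AE x in M. (\<lambda>j. ennreal \<bar>f j x\<bar> * indicator B x) \<longlonglongrightarrow> 0"
      using lim
    proof eventually_elim
      case (elim x)
      then have "(\<lambda>j. ennreal \<bar>f j x\<bar>) \<longlonglongrightarrow> ennreal 0" by (intro tendsto_ennrealI tendsto_rabs_zero)
      then show ?case by (cases "x \<in> B") simp_all
    qed
  qed (simp_all add: fin[unfolded infinity_ennreal_def])
  then show ?thesis by simp
qed

theorem maximal_fn_tendsto_zero_AE:
  fixes f :: "nat \<Rightarrow> 'a::euclidean_space \<Rightarrow> real"
  assumes meas: "\<And>j. f j \<in> borel_measurable lebesgue"
    and dec: "\<And>j. AE x in lebesgue. \<bar>f (Suc j) x\<bar> \<le> \<bar>f j x\<bar>"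
    and lim: "AE x in lebesgue. (\<lambda>j. f j x) \<longlonglongrightarrow> 0"
    and local: "\<And>S. bounded S \<Longrightarrow> (\<integral>\<^sup>+ y\<in>S. ennreal \<bar>f 0 y\<bar> \<partial>lebesgue) < \<infinity>"
    and large: "\<And>x \<epsilon>. \<epsilon> > 0 \<Longrightarrow> \<exists>R. \<forall>a r. R \<le> r \<longrightarrow> x \<in> cube a r \<longrightarrow>
      (\<integral>\<^sup>+ y\<in>cube a r. ennreal \<bar>f 0 y\<bar> \<partial>lebesgue) \<le> ennreal \<epsilon> * ennreal (r ^ DIM('a))"
  shows "AE x in lebesgue. (\<lambda>j. maximal_fn (f j) x) \<longlonglongrightarrow> 0"
proof -
  define B where "B s = cbox (- (2 * s) *\<^sub>R One) ((2 * s) *\<^sub>R (One::'a))" for s :: real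
  define g where "g m j = (\<lambda>y. f j y * indicator (B (real m)) y)" for m :: nat and j
  note meas[measurable]
  have [measurable]: "B s \<in> sets lebesgue" for s unfolding B_def by simp
  have le_first: "AE y in lebesgue. \<forall>j. \<bar>f j y\<bar> \<le> \<bar>f 0 y\<bar>" using dec by (rule AE_abs_le_abs_first)
  have "(\<lambda>j. \<integral>\<^sup>+ y. ennreal \<bar>g m j y\<bar> \<partial>lebesgue) \<longlonglongrightarrow> 0" for m
  proof -
    have "(\<lambda>j. \<integral>\<^sup>+ y\<in>B (real m). ennreal \<bar>f j y\<bar> \<partial>lebesgue) \<longlonglongrightarrow> 0"
      using le_first lim local[of "B (real m)"] unfolding B_def
      by (intro set_nn_integral_tendsto_zero_if_decreasing) simp_all
    moreover have "(\<integral>\<^sup>+ y. ennreal \<bar>g m j y\<bar> \<partial>lebesgue) = (\<integral>\<^sup>+ y\<in>B (real m). ennreal \<bar>f j y\<bar> \<partial>lebesgue)" for j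
      unfolding g_def by (intro nn_integral_cong) (simp add: abs_mult split: split_indicator)
    ultimately show ?thesis by simp
  qed
  then have "(\<Inter>j. {x. ennreal (1 / Suc k) < maximal_fn (g m j) x}) \<in> null_sets lebesgue" for m k
    by (intro null_sets_INT_maximal_fn_greater) (simp_all add: g_def)
  then have "(\<Union>m. \<Union>k. \<Inter>j. {x. ennreal (1 / Suc k) < maximal_fn (g m j) x}) \<in> null_sets lebesgue"
    by (intro null_sets_UN) auto
  then have "AE x in lebesgue. x \<notin> (\<Union>m. \<Union>k. \<Inter>j. {x. ennreal (1 / Suc k) < maximal_fn (g m j) x})"
    by (rule AE_not_in)
  then show ?thesis
  proof eventually_elim
    case (elim x)
    have "antimono (\<lambda>j. maximal_fn (f j) x)"
      using dec by (intro decseq_SucI maximal_fn_mono_AE)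
    moreover have "\<exists>j. maximal_fn (f j) x \<le> ennreal e" if "e > 0" for e
    proof -
      obtain R where R: "\<forall>a r. R \<le> r \<longrightarrow> x \<in> cube a r \<longrightarrow>
          (\<integral>\<^sup>+ y\<in>cube a r. ennreal \<bar>f 0 y\<bar> \<partial>lebesgue) \<le> ennreal e * ennreal (r ^ DIM('a))"
        using large[OF \<open>e > 0\<close>] by blast
      obtain m :: nat where m: "max R (norm x) \<le> real m" using real_arch_simple by blast
      obtain k :: nat where k: "1 / Suc k < e" using nat_approx_posE[OF \<open>e > 0\<close>] by blast
      txt \<open>Cubes of side less than m around x lie in B m and only see the truncation g m j,
        whose maximal function at x is small since x avoids the null set above.\<close>
      obtain j where j: "\<not> ennreal (1 / Suc k) < maximal_fn (g m j) x" using elim by blast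
      have dom: "AE y in lebesgue. \<bar>f j y\<bar> \<le> \<bar>f 0 y\<bar>" using le_first by eventually_elim blast
      have "maximal_fn (\<lambda>y. f j y * indicator (B (real m)) y) x \<le> ennreal e"
        using j ennreal_leI[OF less_imp_le[OF k]] unfolding g_def by (simp add: not_less)
      then have "maximal_fn (f j) x \<le> ennreal e"
        unfolding B_def by (rule maximal_fn_le_by_truncation[OF dom R m])
      then show ?thesis ..
    qed
    ultimately show ?case by (rule antimono_tendsto_zero_ennreal)
  qed
qed

section \<open>Weights and the space ML^p(w)\<close>

lemma ennpowr_ennreal [simp]: "x \<ge> 0 \<Longrightarrow> ennpowr (ennreal x) p = ennreal (x powr p)"
  unfolding ennpowr_def by simp

lemma ennpowr_one [simp]: "ennpowr 1 p = 1"
  unfolding ennpowr_def by simp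

lemma ennpowr_pos: "c > 0 \<Longrightarrow> p > 0 \<Longrightarrow> ennpowr c p > 0"
  unfolding ennpowr_def by (cases c) (auto simp: enn2real_eq_0_iff)

lemma ennpowr_mono:
  assumes "s \<le> t" "p > 0"
  shows "ennpowr s p \<le> ennpowr t p"
proof (cases "t = \<infinity>")
  case False
  with assms(1) obtain s' t' where "s = ennreal s'" "t = ennreal t'" "0 \<le> s'" "s' \<le> t'"
    by (cases s; cases t) (auto simp: top_unique)
  then show ?thesis using assms(2) by (simp add: ennreal_leI powr_mono2)
qed (simp add: ennpowr_def)

lemma borel_measurable_ennpowr [measurable]:
  assumes [measurable]: "u \<in> borel_measurable M"
  shows "(\<lambda>x. ennpowr (u x) p) \<in> borel_measurable M"
  unfolding ennpowr_def by measurable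

lemma tendsto_ennpowr_zero:
  assumes "p > 0" "u \<longlonglongrightarrow> 0"
  shows "(\<lambda>j. ennpowr (u j) p) \<longlonglongrightarrow> 0"
proof -
  have "(\<lambda>j. ennreal (enn2real (u j) powr p)) \<longlonglongrightarrow> ennreal 0"
    using assms by (intro tendsto_ennrealI tendsto_zero_powrI tendsto_enn2real[where l=0]) simp_all
  moreover have "\<forall>\<^sub>F j in sequentially. u j < \<infinity>" using assms(2) by (rule order_tendstoD) simp
  then have "\<forall>\<^sub>F j in sequentially. ennreal (enn2real (u j) powr p) = ennpowr (u j) p"
    by eventually_elim (simp add: ennpowr_def)
  ultimately show ?thesis by (simp add: Lim_transform_eventually)
qed

lemma weight_integrable_iff:
  "weight w \<Longrightarrow> integrable lebesgue w \<longleftrightarrow> (\<integral>\<^sup>+ x. ennreal (w x) \<partial>lebesgue) < \<infinity>"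
  unfolding weight_def by (simp add: integrable_iff_bounded)

lemma weight_nn_integral_pos:
  assumes "weight w" "emeasure lebesgue {x. w x > 0} > 0"
  shows "(\<integral>\<^sup>+ x. ennreal (w x) \<partial>lebesgue) > 0"
proof -
  have "{x \<in> space lebesgue. ennreal (w x) \<noteq> 0} = {x. w x > 0}"
    using assms(1) unfolding weight_def by (auto simp: less_le)
  then show ?thesis
    using assms nn_integral_0_iff[of "\<lambda>x. ennreal (w x)" lebesgue] unfolding weight_def
    by (simp add: not_gr_zero[symmetric] del: not_gr_zero)
qed

lemma MLp_integral_le_if_maximal_fn_le:
  assumes "weight w" "p > 0" "\<And>x. maximal_fn f x \<le> c"
  shows "MLp_integral p w f \<le> ennpowr c p * (\<integral>\<^sup>+ x. ennreal (w x) \<partial>lebesgue)"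
proof -
  have "MLp_integral p w f \<le> (\<integral>\<^sup>+ x. ennpowr c p * ennreal (w x) \<partial>lebesgue)"
    unfolding MLp_integral_def using assms(2,3)
    by (intro nn_integral_mono mult_right_mono ennpowr_mono) auto
  also have "\<dots> = ennpowr c p * (\<integral>\<^sup>+ x. ennreal (w x) \<partial>lebesgue)"
    using assms(1) unfolding weight_def by (simp add: nn_integral_cmult)
  finally show ?thesis .
qed

lemma MLp_integral_ge_if_maximal_fn_ge:
  assumes "weight w" "p > 0" "\<And>x. c \<le> maximal_fn f x"
  shows "ennpowr c p * (\<integral>\<^sup>+ x. ennreal (w x) \<partial>lebesgue) \<le> MLp_integral p w f"
proof -
  have "ennpowr c p * (\<integral>\<^sup>+ x. ennreal (w x) \<partial>lebesgue) = (\<integral>\<^sup>+ x. ennpowr c p * ennreal (w x) \<partial>lebesgue)"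
    using assms(1) unfolding weight_def by (simp add: nn_integral_cmult)
  also have "\<dots> \<le> MLp_integral p w f"
    unfolding MLp_integral_def using assms(2,3)
    by (intro nn_integral_mono mult_right_mono ennpowr_mono) auto
  finally show ?thesis .
qed

lemma MLp_integral_eq_top_if_maximal_fn_ge:
  assumes "weight w" "(\<integral>\<^sup>+ x. ennreal (w x) \<partial>lebesgue) = \<infinity>" "p > 0" "c > 0"
    and "\<And>x. c \<le> maximal_fn g x"
  shows "MLp_integral p w g = \<infinity>"
  using MLp_integral_ge_if_maximal_fn_ge[OF assms(1,3,5)] ennpowr_pos[OF assms(4,3)] assms(2)
  by (simp add: top_unique)

lemma MLp_set_nn_integral_finite:
  fixes g :: "'a::euclidean_space \<Rightarrow> real"
  assumes "weight w" "(\<integral>\<^sup>+ x. ennreal (w x) \<partial>lebesgue) = \<infinity>" "p > 0"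
    and "MLp_integral p w g < \<infinity>" "bounded S"
  shows "(\<integral>\<^sup>+ y\<in>S. ennreal \<bar>g y\<bar> \<partial>lebesgue) < \<infinity>"
proof (rule ccontr)
  assume "\<not> ?thesis"
  then have "maximal_fn g x = \<infinity>" for x
    using assms(5) by (intro maximal_fn_eq_top_if_set_nn_integral_eq_top) (auto simp: less_top[symmetric])
  then have "MLp_integral p w g = \<infinity>"
    using assms(1-3) by (intro MLp_integral_eq_top_if_maximal_fn_ge[where c=\<infinity>]) auto
  with assms(4) show False by simp
qed

lemma MLp_large_cube_averages:
  fixes g :: "'a::euclidean_space \<Rightarrow> real"
  assumes "weight w" "(\<integral>\<^sup>+ x. ennreal (w x) \<partial>lebesgue) = \<infinity>" "p > 0"
    and "MLp_integral p w g < \<infinity>" "\<epsilon> > 0"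
  shows "\<exists>R. \<forall>a r. R \<le> r \<longrightarrow> x \<in> cube a r \<longrightarrow>
    (\<integral>\<^sup>+ y\<in>cube a r. ennreal \<bar>g y\<bar> \<partial>lebesgue) \<le> ennreal \<epsilon> * ennreal (r ^ DIM('a))"
proof (rule ccontr)
  assume "\<not> ?thesis"
  then have "ennreal (\<epsilon> / 3 ^ DIM('a)) \<le> maximal_fn g y" for y
    using assms(5) by (intro maximal_fn_ge_if_large_cube_averages) (auto simp: not_le)
  then have "MLp_integral p w g = \<infinity>"
    using assms(1-3,5) by (intro MLp_integral_eq_top_if_maximal_fn_ge) auto
  with assms(4) show False by simp
qed

lemma MLp_integral_tendsto_zero:
  fixes f :: "nat \<Rightarrow> 'a::euclidean_space \<Rightarrow> real"
  assumes w: "weight w" and p: "p > 0" and fin: "MLp_integral p w (f 0) < \<infinity>"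
    and le: "\<And>j x. maximal_fn (f j) x \<le> maximal_fn (f 0) x"
    and lim: "AE x in lebesgue. (\<lambda>j. maximal_fn (f j) x) \<longlonglongrightarrow> 0"
  shows "(\<lambda>j. MLp_integral p w (f j)) \<longlonglongrightarrow> 0"
proof -
  have "w \<in> borel_measurable lebesgue" using w by (simp add: weight_def)
  then have meas: "(\<lambda>x. ennpowr (maximal_fn (f j) x) p * ennreal (w x)) \<in> borel_measurable lebesgue" for j
    by (intro borel_measurable_times_ennreal borel_measurable_ennpowr borel_measurable_maximal_fn) simp
  have "(\<lambda>j. MLp_integral p w (f j)) \<longlonglongrightarrow> (\<integral>\<^sup>+ (x::'a). 0 \<partial>lebesgue)"
    unfolding MLp_integral_def
  proof (rule nn_integral_dominated_convergence[where w="\<lambda>x. ennpowr (maximal_fn (f 0) x) p * ennreal (w x)"])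
    show "AE x in lebesgue. ennpowr (maximal_fn (f j) x) p * ennreal (w x)
        \<le> ennpowr (maximal_fn (f 0) x) p * ennreal (w x)" for j
      using p le by (intro AE_I2 mult_right_mono ennpowr_mono) simp_all
    show "(\<integral>\<^sup>+ x. ennpowr (maximal_fn (f 0) x) p * ennreal (w x) \<partial>lebesgue) < \<infinity>"
      using fin by (simp add: MLp_integral_def)
    show "AE x in lebesgue. (\<lambda>j. ennpowr (maximal_fn (f j) x) p * ennreal (w x)) \<longlonglongrightarrow> 0"
      using lim
    proof eventually_elim
      case (elim x)
      then have "(\<lambda>j. ennreal (w x) * ennpowr (maximal_fn (f j) x) p) \<longlonglongrightarrow> ennreal (w x) * 0"
        by (intro ennreal_tendsto_cmult tendsto_ennpowr_zero p) simp_all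
      then show ?case by (simp add: mult.commute)
    qed
  qed (simp_all add: meas)
  then show ?thesis by simp
qed

section \<open>Order continuity\<close>

definition orthant :: "real \<Rightarrow> 'a::euclidean_space set" where
  "orthant s = {y. \<forall>b\<in>Basis. s \<le> y \<bullet> b}"

lemma orthant_in_sets_lebesgue: "orthant s \<in> sets lebesgue"
proof -
  have "orthant s = (\<Inter>b\<in>Basis. {y. s \<le> y \<bullet> b})" unfolding orthant_def by auto
  moreover have "closed (\<Inter>b\<in>Basis. {y::'a. s \<le> y \<bullet> b})"
    by (intro closed_INT ballI closed_halfspace_component_ge)
  ultimately show ?thesis by (metis borel_closed sets_completionI_sets sets_lborel)
qed

lemma maximal_fn_indicator_orthant_ge:
  fixes x :: "'a::euclidean_space"
  shows "ennreal ((1/2) ^ DIM('a)) \<le> maximal_fn (indicator (orthant s)) x"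
proof -
  define r where "r = 2 * (\<bar>s\<bar> + norm x + 1)"
  have r: "r > 0" unfolding r_def by (simp add: add_nonneg_pos)
  let ?Q = "cube (x + (r/2) *\<^sub>R One) (r/2)"
  have "?Q \<subseteq> orthant s"
  proof
    fix y assume y: "y \<in> ?Q"
    have "s \<le> y \<bullet> b" if b: "b \<in> Basis" for b
    proof -
      have "\<bar>x \<bullet> b\<bar> \<le> norm x" using b by (rule Basis_le_norm)
      moreover have "x \<bullet> b + r/2 \<le> y \<bullet> b" using y b by (simp add: mem_box inner_add_left)
      moreover have "r / 2 = \<bar>s\<bar> + norm x + 1" unfolding r_def by simp
      ultimately show ?thesis by linarith
    qed
    then show "y \<in> orthant s" unfolding orthant_def by blast
  qed
  moreover have "?Q \<subseteq> cube x r"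
    unfolding subset_box(1) using r by (simp add: inner_add_left)
  ultimately have "(\<integral>\<^sup>+ y. indicator ?Q y \<partial>lebesgue) \<le> (\<integral>\<^sup>+ y\<in>cube x r. ennreal \<bar>indicator (orthant s) y\<bar> \<partial>lebesgue)"
    by (intro nn_integral_mono) (auto simp: indicator_def)
  moreover have "(\<integral>\<^sup>+ y. indicator ?Q y \<partial>lebesgue) = emeasure lebesgue ?Q"
    by (rule nn_integral_indicator) simp
  moreover have "emeasure lebesgue ?Q = ennreal ((1/2) ^ DIM('a)) * ennreal (r ^ DIM('a))"
    using r emeasure_cube[of "r/2" "x + (r/2) *\<^sub>R One"]
    by (simp add: ennreal_mult'[symmetric] power_mult_distrib[symmetric])
  moreover have "x \<in> cube x r" using r by (simp add: mem_box inner_add_left)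
  ultimately show ?thesis using r by (intro le_maximal_fn_cubeI) auto
qed

lemma not_MLp_order_continuous_if_integrable:
  fixes w :: "'a::euclidean_space \<Rightarrow> real"
  assumes p: "p > 0" and w: "weight w" and pos: "emeasure lebesgue {x. w x > 0} > 0"
    and int: "integrable lebesgue w"
  shows "\<not> MLp_order_continuous p w"
proof
  assume oc: "MLp_order_continuous p w"
  define f where "f j = (indicator (orthant (real j)) :: 'a \<Rightarrow> real)" for j :: nat
  define W where "W = (\<integral>\<^sup>+ x. ennreal (w x) \<partial>lebesgue)"
  define c where "c = ennpowr (ennreal ((1/2) ^ DIM('a))) p"
  have W: "0 < W" "W < \<infinity>" using weight_nn_integral_pos[OF w pos] int w
    by (simp_all add: W_def weight_integrable_iff)
  have c: "0 < c" "c < \<infinity>" unfolding c_def using p by auto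
  have lower: "c * W \<le> MLp_integral p w (f j)" for j
    unfolding c_def W_def f_def using w p by (intro MLp_integral_ge_if_maximal_fn_ge maximal_fn_indicator_orthant_ge) auto
  have upper: "MLp_integral p w (f j) \<le> W" for j
    using MLp_integral_le_if_maximal_fn_le[OF w _ maximal_fn_indicator_le_one] p
    unfolding W_def f_def by simp
  have "f j \<in> MLp_space p w" for j
    using upper[of j] W orthant_in_sets_lebesgue unfolding MLp_space_def f_def
    by (auto intro: borel_measurable_indicator)
  moreover have "AE x in lebesgue. \<bar>f (Suc j) x\<bar> \<le> \<bar>f j x\<bar>" for j
    by (intro AE_I2) (auto simp: f_def orthant_def indicator_def)
  moreover have "AE x in lebesgue. (\<lambda>j. f j x) \<longlonglongrightarrow> 0"
  proof (intro AE_I2 tendsto_eventually)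
    fix x :: 'a
    obtain b :: 'a where b: "b \<in> Basis" using nonempty_Basis by blast
    obtain N :: nat where "x \<bullet> b < real N" using reals_Archimedean2 by blast
    then have "x \<notin> orthant (real j)" if "j \<ge> N" for j
      using that b unfolding orthant_def by force
    then show "\<forall>\<^sub>F j in sequentially. f j x = 0"
      unfolding f_def eventually_sequentially by (intro exI[of _ N]) auto
  qed
  ultimately have "(\<lambda>j. MLp_norm p w (f j)) \<longlonglongrightarrow> 0"
    using oc unfolding MLp_order_continuous_def by blast
  moreover have "enn2real (c * W) powr (1/p) \<le> MLp_norm p w (f j)" for j
    unfolding MLp_norm_def using lower[of j] upper[of j] W p
    by (intro powr_mono2 enn2real_mono) auto
  ultimately have "enn2real (c * W) powr (1/p) \<le> 0"
    by (intro LIMSEQ_le_const) auto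
  moreover have "enn2real (c * W) > 0"
    using c W by (simp add: enn2real_positive_iff ennreal_mult_less_top ennreal_zero_less_mult_iff)
  ultimately show False by simp
qed

lemma MLp_order_continuous_if_not_integrable:
  fixes w :: "'a::euclidean_space \<Rightarrow> real"
  assumes p: "p > 0" and w: "weight w" and not_int: "\<not> integrable lebesgue w"
  shows "MLp_order_continuous p w"
  unfolding MLp_order_continuous_def
proof (intro allI impI)
  fix f :: "nat \<Rightarrow> 'a \<Rightarrow> real"
  assume space: "\<forall>j. f j \<in> MLp_space p w"
    and dec: "\<forall>j. AE x in lebesgue. \<bar>f (Suc j) x\<bar> \<le> \<bar>f j x\<bar>"
    and lim: "AE x in lebesgue. (\<lambda>j. f j x) \<longlonglongrightarrow> 0"
  have w_inf: "(\<integral>\<^sup>+ x. ennreal (w x) \<partial>lebesgue) = \<infinity>"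
    using not_int w by (simp add: weight_integrable_iff less_top[symmetric])
  have fin: "MLp_integral p w (f j) < \<infinity>" and meas: "f j \<in> borel_measurable lebesgue" for j
    using space by (auto simp: MLp_space_def)
  have "AE y in lebesgue. \<bar>f j y\<bar> \<le> \<bar>f 0 y\<bar>" for j
    using AE_abs_le_abs_first[of f lebesgue] dec by auto
  then have "maximal_fn (f j) x \<le> maximal_fn (f 0) x" for j x by (rule maximal_fn_mono_AE)
  moreover have "AE x in lebesgue. (\<lambda>j. maximal_fn (f j) x) \<longlonglongrightarrow> 0"
    using dec by (intro maximal_fn_tendsto_zero_AE meas lim MLp_set_nn_integral_finite[OF w w_inf p fin]
        MLp_large_cube_averages[OF w w_inf p fin]) simp_all
  ultimately have "(\<lambda>j. MLp_integral p w (f j)) \<longlonglongrightarrow> 0"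
    by (rule MLp_integral_tendsto_zero[OF w p fin])
  then have "(\<lambda>j. enn2real (MLp_integral p w (f j))) \<longlonglongrightarrow> 0"
    using tendsto_enn2real[where l=0] by simp
  then show "(\<lambda>j. MLp_norm p w (f j)) \<longlonglongrightarrow> 0"
    unfolding MLp_norm_def using p by (intro tendsto_zero_powrI[OF _ tendsto_const]) auto
qed

theorem lemma3p5:
  fixes p :: real and w :: "'a::euclidean_space \<Rightarrow> real"
  assumes "p > 1"
    and "w \<in> Np_class p"
    and "emeasure lebesgue {x. w x > 0} > 0"
  shows "MLp_order_continuous p w \<longleftrightarrow> \<not> integrable lebesgue w"
proof -
  have p: "p > 0" and w: "weight w" using assms(1,2) unfolding Np_class_def by simp_all
  show ?thesis
    using not_MLp_order_continuous_if_integrable[OF p w assms(3)]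
      MLp_order_continuous_if_not_integrable[OF p w] by blast
qed

end
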